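(* For each $k\in\mathbb{N}$, the set $\mathcal{A}_k=\{K\in\mathcal{K}^2_*: \mathrm{conv}\,\mathcal{M}_K \text{ has at most } k \text{ exposed points}\}$ is closed in $\mathcal{K}^2_*$.
   Context: $\mathcal{K}^2_*$ is the set of strictly convex bodies (nonempty compact convex subsets of $\mathbb{R}^2$ whose boundary contains no nondegenerate segment), with the Hausdorff metric. For $K\in\mathcal{K}^2_*$ and $u\in\mathbb{S}^1$, $x_K(u)$ is the unique point of $K$ on its supporting line with outer unit normal $u$, $m_K(u)=\frac12[x_K(u)+x_K(-u)]$, and the middle hedgehog is $\mathcal{M}_K=\{m_K(u):u\in\mathbb{S}^1\}$. *)

theory Defs
  imports "HOL-Analysis.Analysis"
begin

type_synonym R2 = "real^2"

definition hausdorff_dist :: "R2 set \<Rightarrow> R2 set \<Rightarrow> real" where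
  "hausdorff_dist A B = max (SUP a\<in>A. infdist a B) (SUP b\<in>B. infdist b A)"

definition strictly_convex_body :: "R2 set \<Rightarrow> bool" where
  "strictly_convex_body K \<longleftrightarrow> K \<noteq> {} \<and> compact K \<and> convex K \<and>
     (\<forall>a b. a \<noteq> b \<longrightarrow> \<not> closed_segment a b \<subseteq> frontier K)"

definition supp_point :: "R2 set \<Rightarrow> R2 \<Rightarrow> R2" where
  "supp_point K u = (THE x. x \<in> K \<and> (\<forall>y\<in>K. y \<bullet> u \<le> x \<bullet> u))"

definition mid_point_fn :: "R2 set \<Rightarrow> R2 \<Rightarrow> R2" where
  "mid_point_fn K u = (1/2) *\<^sub>R (supp_point K u + supp_point K (- u))"

definition middle_hedgehog :: "R2 set \<Rightarrow> R2 set" where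
  "middle_hedgehog K = mid_point_fn K ` sphere 0 1"

definition exposed_points :: "R2 set \<Rightarrow> R2 set" where
  "exposed_points C = {p. {p} exposed_face_of C}"

definition A_set :: "nat \<Rightarrow> R2 set set" where
  "A_set k = {K. strictly_convex_body K \<and>
      finite (exposed_points (convex hull (middle_hedgehog K))) \<and>
      card (exposed_points (convex hull (middle_hedgehog K))) \<le> k}"

end

theory Submission
  imports Defs
begin

text \<open>Exposed points of convex hulls of compact sets cannot disappear under small Hausdorff
  perturbations: if \<open>p\<close> is exposed in \<open>convex hull M\<close>, there is a large ball through \<open>p\<close>
  containing the rest of \<open>M\<close> with a margin, and the point of a nearby compact set \<open>N\<close> farthest
  from its centre is an exposed point of \<open>convex hull N\<close> close to \<open>p\<close>. Since support points of
  strictly convex bodies depend uniformly continuously on the body, so do middle hedgehogs.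
  Hence \<open>k + 1\<close> separated exposed points of \<open>convex hull M\<^sub>K\<close> give \<open>k + 1\<close> distinct exposed
  points for every \<open>L\<close> near \<open>K\<close>, so the complement of \<open>A\<^sub>k\<close> is open.\<close>

definition hausdorff_close :: "real \<Rightarrow> 'a::metric_space set \<Rightarrow> 'a set \<Rightarrow> bool" where
  "hausdorff_close \<eta> A B \<longleftrightarrow> (\<forall>x\<in>A. \<exists>y\<in>B. dist x y < \<eta>) \<and> (\<forall>y\<in>B. \<exists>x\<in>A. dist y x < \<eta>)"

lemma eventually_at_right_0_obtain:
  assumes "\<forall>\<^sub>F x in at_right (0::real). P x"
  obtains x where "x > 0" "P x"
  using eventually_happens'[OF trivial_limit_at_right_real eventually_conj[OF eventually_at_right_less assms]]
  by blast

lemma finite_set_separated: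
  fixes P :: "'a::metric_space set"
  assumes "finite P"
  obtains \<delta> where "\<delta> > 0" "\<And>p q. p \<in> P \<Longrightarrow> q \<in> P \<Longrightarrow> p \<noteq> q \<Longrightarrow> 2 * \<delta> \<le> dist p q"
proof -
  have "\<forall>\<^sub>F \<delta> in at_right 0. 2 * \<delta> \<le> dist p q" if "p \<noteq> q" for p q :: 'a
    unfolding eventually_at_right_field using that by (intro exI[of _ "dist p q / 2"]) auto
  then have "\<forall>\<^sub>F \<delta> in at_right 0. \<forall>p\<in>P. \<forall>q\<in>P. p \<noteq> q \<longrightarrow> 2 * \<delta> \<le> dist p q"
    using assms by (intro eventually_ball_finite ballI) (auto intro: eventually_mono)
  then show ?thesis
    using that by (elim eventually_at_right_0_obtain) blast
qed

lemma card_le_card_if_separated_near: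
  fixes P E :: "'a::metric_space set"
  assumes "finite E"
    and separated: "\<And>p q. p \<in> P \<Longrightarrow> q \<in> P \<Longrightarrow> p \<noteq> q \<Longrightarrow> 2 * \<delta> \<le> dist p q"
    and near: "\<And>p. p \<in> P \<Longrightarrow> \<exists>q\<in>E. dist q p < \<delta>"
  shows "card P \<le> card E"
proof -
  obtain g where g: "\<And>p. p \<in> P \<Longrightarrow> g p \<in> E \<and> dist (g p) p < \<delta>"
    using near by metis
  have "inj_on g P"
  proof (rule inj_onI, rule ccontr)
    fix p q assume pq: "p \<in> P" "q \<in> P" "g p = g q" "p \<noteq> q"
    have "dist p q \<le> dist (g p) p + dist (g q) q"
      using dist_triangle[of p q "g p"] pq(3) by (simp add: dist_commute)
    then show False using g[OF pq(1)] g[OF pq(2)] separated[OF pq(1,2,4)] by linarith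
  qed
  then show ?thesis
    using card_inj_on_le[of g P E] g assms(1) by blast
qed

lemma farthest_point_exposed_face:
  fixes S :: "'a::euclidean_space set"
  assumes "q \<in> S" and farthest: "\<And>x. x \<in> S \<Longrightarrow> dist x c \<le> dist q c"
  shows "{q} exposed_face_of convex hull S"
proof -
  define r where "r = dist q c"
  define a where "a = q - c"
  have hull_in_cball: "convex hull S \<subseteq> cball c r"
    by (rule hull_minimal) (use farthest in \<open>auto simp: r_def dist_commute\<close>)
  have aa: "a \<bullet> a = r\<^sup>2"
    by (simp add: a_def r_def dist_norm power2_norm_eq_inner)
  have near: "norm (x - c) \<le> r" if "x \<in> convex hull S" for x
    using hull_in_cball that by (metis dist_commute dist_norm mem_cball subsetD)
  have sq: "(x - c) \<bullet> (x - c) \<le> r\<^sup>2" if "x \<in> convex hull S" for x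
    using power_mono[OF near[OF that] norm_ge_zero, of 2] by (simp add: power2_norm_eq_inner)
  have le: "a \<bullet> x \<le> a \<bullet> q" if "x \<in> convex hull S" for x
  proof -
    have "a \<bullet> (x - c) \<le> norm a * norm (x - c)" by (rule norm_cauchy_schwarz)
    also have "\<dots> \<le> r * r"
      using near[OF that] by (intro mult_mono) (auto simp: a_def r_def dist_norm)
    finally show ?thesis using aa by (simp add: a_def inner_diff_right power2_eq_square)
  qed
  have "convex hull S \<inter> {x. a \<bullet> x = a \<bullet> q} = {q}"
  proof safe
    fix x assume x: "x \<in> convex hull S" "a \<bullet> x = a \<bullet> q"
    have "(x - q) \<bullet> (x - q) = (x - c) \<bullet> (x - c) - 2 * (a \<bullet> (x - c)) + a \<bullet> a"
      by (simp add: a_def inner_diff_left inner_diff_right inner_commute algebra_simps)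
    also have "a \<bullet> (x - c) = a \<bullet> a"
      using x(2) by (simp add: a_def inner_diff_right)
    finally have "(x - q) \<bullet> (x - q) \<le> 0"
      using sq[OF x(1)] aa by linarith
    then show "x = q" using inner_ge_zero[of "x - q"] by simp
  qed (use assms(1) hull_inc in auto)
  then show ?thesis
    using exposed_face_of_Int_supporting_hyperplane_le[of "convex hull S" a "a \<bullet> q"] le by auto
qed

lemma exposed_point_strict_margin:
  fixes M :: "'a::euclidean_space set"
  assumes "compact M" "{p} exposed_face_of convex hull M" "\<delta> > 0"
  obtains a \<beta> where "\<beta> > 0" "\<And>x. x \<in> M \<Longrightarrow> \<delta> \<le> dist x p \<Longrightarrow> a \<bullet> x + \<beta> \<le> a \<bullet> p"
proof -
  obtain a b where hull_le: "convex hull M \<subseteq> {x. a \<bullet> x \<le> b}"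
    and touch: "{p} = convex hull M \<inter> {x. a \<bullet> x = b}"
    using assms(2) unfolding exposed_face_of_def by blast
  have ap: "a \<bullet> p = b"
    using touch by blast
  have strict: "a \<bullet> x < a \<bullet> p" if "x \<in> M" "x \<noteq> p" for x
  proof -
    have "x \<in> convex hull M"
      using that(1) by (rule hull_inc)
    then have "a \<bullet> x \<le> b" "a \<bullet> x \<noteq> b"
      using hull_le touch that(2) by blast+
    then show ?thesis
      using ap by simp
  qed
  define T where "T = M \<inter> {x. \<delta> \<le> dist x p}"
  have "compact T"
    unfolding T_def by (intro compact_Int_closed assms(1) closed_Collect_le continuous_intros)
  show ?thesis
  proof (cases "T = {}")
    case True
    then show ?thesis using that[of 1] by (auto simp: T_def)
  next
    case False
    obtain x1 where x1: "x1 \<in> T" "\<And>y. y \<in> T \<Longrightarrow> a \<bullet> y \<le> a \<bullet> x1"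
      using continuous_attains_sup[OF \<open>compact T\<close> False continuous_on_inner[OF continuous_on_const continuous_on_id]]
      by blast
    then have "a \<bullet> x1 < a \<bullet> p"
      using assms(3) by (intro strict) (auto simp: T_def)
    then show ?thesis
      using that[of "a \<bullet> p - a \<bullet> x1" a] x1 by (fastforce simp: T_def)
  qed
qed

lemma margin_of_squared_margin:
  fixes d r :: real
  assumes "0 \<le> d" "0 \<le> r" "d\<^sup>2 + 1 \<le> r\<^sup>2"
  shows "d + 1 / (2 * r + 1) \<le> r"
proof -
  have "d \<le> r"
    using assms power2_le_imp_le[of d r] by linarith
  have "1 \<le> (r - d) * (r + d)"
    using assms(3) by (simp add: algebra_simps power2_eq_square)
  also have "\<dots> \<le> (r - d) * (2 * r + 1)"
    using \<open>d \<le> r\<close> by (intro mult_left_mono) auto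
  finally have "1 / (2 * r + 1) \<le> r - d"
    using assms(2) by (simp add: pos_divide_le_eq)
  then show ?thesis by simp
qed

text \<open>The centre lies far out along the inner normal of the hyperplane exposing \<open>p\<close>.\<close>
lemma exposed_point_ball_margin:
  fixes M :: "'a::euclidean_space set"
  assumes "compact M" "{p} exposed_face_of convex hull M" "\<delta> > 0"
  obtains c \<rho> where "\<rho> > 0" "\<And>x. x \<in> M \<Longrightarrow> \<delta> \<le> dist x p \<Longrightarrow> dist x c + \<rho> \<le> dist p c"
proof -
  obtain a \<beta> where \<beta>: "\<beta> > 0" "\<And>x. x \<in> M \<Longrightarrow> \<delta> \<le> dist x p \<Longrightarrow> a \<bullet> x + \<beta> \<le> a \<bullet> p"
    using exposed_point_strict_margin[OF assms] by blast
  obtain B where B: "\<And>x. x \<in> M \<Longrightarrow> norm x \<le> B"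
    using compact_imp_bounded[OF assms(1)] by (auto simp: bounded_iff)
  define D where "D = B + norm p"
  have D: "norm (x - p) \<le> D" if "x \<in> M" for x
    using B[OF that] norm_triangle_ineq4[of x p] by (simp add: D_def)
  define R where "R = (D\<^sup>2 + 1) / (2 * \<beta>)"
  define c where "c = p - R *\<^sub>R a"
  have sq: "(dist x c)\<^sup>2 + 1 \<le> (dist p c)\<^sup>2" if "x \<in> M" "\<delta> \<le> dist x p" for x
  proof -
    have "x - c = (x - p) + R *\<^sub>R a"
      by (simp add: c_def)
    then have "(dist x c)\<^sup>2 = (x - p) \<bullet> (x - p) + 2 * R * (a \<bullet> (x - p)) + R\<^sup>2 * (a \<bullet> a)"
      unfolding dist_norm power2_norm_eq_inner
      by (simp add: inner_add_left inner_add_right inner_commute power2_eq_square algebra_simps)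
    moreover have "(x - p) \<bullet> (x - p) \<le> D\<^sup>2"
      using power_mono[OF D[OF that(1)] norm_ge_zero, of 2] by (simp add: power2_norm_eq_inner)
    moreover have "2 * R * (a \<bullet> (x - p)) \<le> 2 * R * (- \<beta>)"
      using \<beta>(1) \<beta>(2)[OF that] by (intro mult_left_mono) (auto simp: R_def inner_diff_right)
    moreover have "2 * R * \<beta> = D\<^sup>2 + 1"
      using \<beta>(1) by (simp add: R_def)
    moreover have "(dist p c)\<^sup>2 = R\<^sup>2 * (a \<bullet> a)"
      by (simp add: c_def dist_norm power2_norm_eq_inner power_mult_distrib)
    ultimately show ?thesis by linarith
  qed
  show ?thesis
  proof (rule that[of "1 / (2 * dist p c + 1)" c])
    show "0 < 1 / (2 * dist p c + 1)"
      by (simp add: add_nonneg_pos)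
    show "dist x c + 1 / (2 * dist p c + 1) \<le> dist p c" if "x \<in> M" "\<delta> \<le> dist x p" for x
      using margin_of_squared_margin[OF zero_le_dist zero_le_dist sq[OF that]] .
  qed
qed

text \<open>The point of \<open>N\<close> farthest from the centre of the ball above is exposed, and the margin
  forces it to be close to \<open>p\<close>.\<close>
lemma eventually_exposed_point_near:
  fixes M :: "'a::euclidean_space set"
  assumes "compact M" "{p} exposed_face_of convex hull M" "\<delta> > 0"
  shows "\<forall>\<^sub>F \<eta> in at_right 0. \<forall>N. compact N \<and> hausdorff_close \<eta> M N \<longrightarrow>
           (\<exists>q. {q} exposed_face_of convex hull N \<and> dist q p < \<delta>)"
proof -
  have "p extreme_point_of convex hull M"
    using assms(2) by (simp add: exposed_face_of_def face_of_singleton)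
  then have "p \<in> M"
    by (rule extreme_point_of_convex_hull)
  obtain c \<rho> where \<rho>: "\<rho> > 0" "\<And>x. x \<in> M \<Longrightarrow> \<delta>/2 \<le> dist x p \<Longrightarrow> dist x c + \<rho> \<le> dist p c"
    using exposed_point_ball_margin[OF assms(1,2) half_gt_zero[OF assms(3)]] by blast
  show ?thesis
    unfolding eventually_at_right_field
  proof (intro exI[of _ "min (\<delta>/2) (\<rho>/2)"] conjI allI impI)
    fix \<eta> N assume \<eta>: "0 < \<eta>" "\<eta> < min (\<delta>/2) (\<rho>/2)" and N: "compact N \<and> hausdorff_close \<eta> M N"
    obtain y0 where y0: "y0 \<in> N" "dist p y0 < \<eta>"
      using N \<open>p \<in> M\<close> by (auto simp: hausdorff_close_def)
    then have "N \<noteq> {}" by blast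
    then obtain q where q: "q \<in> N" "\<And>y. y \<in> N \<Longrightarrow> dist y c \<le> dist q c"
      using continuous_attains_sup[of N "\<lambda>y. dist y c"] N continuous_on_dist[OF continuous_on_id continuous_on_const]
      by blast
    obtain x where x: "x \<in> M" "dist q x < \<eta>"
      using N q(1) by (auto simp: hausdorff_close_def)
    have "dist p c < dist x c + 2 * \<eta>"
      using q(2)[OF y0(1)] y0(2) x(2) dist_triangle[of p c y0] dist_triangle[of q c x]
      by (simp add: dist_commute)
    then have "dist x p < \<delta>/2"
      using \<rho>(2)[OF x(1)] \<eta>(2) by fastforce
    then have "dist q p < \<delta>"
      using x(2) \<eta>(2) dist_triangle[of q p x] by linarith
    then show "\<exists>q. {q} exposed_face_of convex hull N \<and> dist q p < \<delta>"
      using farthest_point_exposed_face[OF q] by blast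
  qed (use assms(3) \<rho>(1) in simp)
qed

lemma strictly_convex_bodyD:
  assumes "strictly_convex_body K"
  shows "K \<noteq> {}" "compact K" "convex K"
  using assms by (simp_all add: strictly_convex_body_def)

lemma infdist_less_if_hausdorff_dist_less:
  fixes K L :: "R2 set"
  assumes "compact K" "x \<in> K" "hausdorff_dist K L < d"
  shows "infdist x L < d"
proof -
  have "bdd_above ((\<lambda>a. infdist a L) ` K)"
    using assms(1) by (intro bounded_imp_bdd_above compact_imp_bounded compact_continuous_image
        continuous_on_infdist continuous_on_id)
  then have "infdist x L \<le> (SUP a\<in>K. infdist a L)"
    using assms(2) by (rule cSUP_upper2) simp
  also have "\<dots> \<le> hausdorff_dist K L"
    by (simp add: hausdorff_dist_def)
  finally show ?thesis
    using assms(3) by simp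
qed

lemma hausdorff_close_if_hausdorff_dist_less:
  fixes K L :: "R2 set"
  assumes "compact K" "K \<noteq> {}" "compact L" "L \<noteq> {}" "hausdorff_dist K L < d"
  shows "hausdorff_close d K L"
proof -
  have "hausdorff_dist L K < d"
    using assms(5) by (simp add: hausdorff_dist_def max.commute)
  have "\<exists>y\<in>B. dist x y < d" if "compact A" "compact B" "B \<noteq> {}" "x \<in> A" "hausdorff_dist A B < d"
    for x and A B :: "R2 set"
    using infdist_attains_inf[OF compact_imp_closed[OF that(2)] that(3), of x]
      infdist_less_if_hausdorff_dist_less[OF that(1,4,5)] by metis
  then show ?thesis
    using assms \<open>hausdorff_dist L K < d\<close> unfolding hausdorff_close_def by blast
qed

lemma linear_maximizer_in_frontier:
  fixes K :: "'a::euclidean_space set"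
  assumes "closed K" "x \<in> K" "u \<noteq> 0" "\<And>y. y \<in> K \<Longrightarrow> y \<bullet> u \<le> x \<bullet> u"
  shows "x \<in> frontier K"
proof -
  have "x \<notin> interior K"
  proof
    assume "x \<in> interior K"
    then obtain e where e: "e > 0" "ball x e \<subseteq> K"
      by (meson mem_interior)
    define y where "y = x + (e / (2 * norm u)) *\<^sub>R u"
    have "dist x y < e"
      using e(1) assms(3) by (simp add: y_def dist_norm)
    then have "y \<bullet> u \<le> x \<bullet> u"
      using e(2) assms(4) by auto
    moreover have "y \<bullet> u = x \<bullet> u + e / 2 * norm u"
      using assms(3) by (simp add: y_def inner_add_left power2_norm_eq_inner[symmetric] power2_eq_square)
    moreover have "e * norm u > 0"
      using assms(3) e(1) by simp
    ultimately show False
      by linarith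
  qed
  then show ?thesis
    using assms(1,2) by (simp add: frontier_def)
qed

lemma linear_maximizer_unique:
  assumes K: "strictly_convex_body K" and "u \<noteq> 0" "x \<in> K" "z \<in> K"
    and "\<And>y. y \<in> K \<Longrightarrow> y \<bullet> u \<le> x \<bullet> u" "\<And>y. y \<in> K \<Longrightarrow> y \<bullet> u \<le> z \<bullet> u"
  shows "x = z"
proof (rule ccontr)
  assume "x \<noteq> z"
  have eq: "x \<bullet> u = z \<bullet> u"
    using assms(3-6) by (simp add: order_antisym)
  have "closed_segment x z \<subseteq> frontier K"
  proof
    fix w assume w: "w \<in> closed_segment x z"
    then obtain t where w_def: "w = (1 - t) *\<^sub>R x + t *\<^sub>R z"
      by (auto simp: closed_segment_def)
    have "w \<in> K"
      using w strictly_convex_bodyD(3)[OF K] assms(3,4) by (meson closed_segment_subset subsetD)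
    moreover have "w \<bullet> u = x \<bullet> u"
      using eq by (simp add: w_def inner_add_left algebra_simps)
    ultimately show "w \<in> frontier K"
      using linear_maximizer_in_frontier[OF compact_imp_closed[OF strictly_convex_bodyD(2)[OF K]]]
        assms(2,5) by simp
  qed
  then show False
    using K \<open>x \<noteq> z\<close> by (auto simp: strictly_convex_body_def)
qed

lemma supp_point_maximizer:
  assumes K: "strictly_convex_body K" and "u \<noteq> 0"
  shows "supp_point K u \<in> K \<and> (\<forall>y\<in>K. y \<bullet> u \<le> supp_point K u \<bullet> u)"
proof -
  obtain x where x: "x \<in> K" "\<forall>y\<in>K. y \<bullet> u \<le> x \<bullet> u"
    using continuous_attains_sup[OF strictly_convex_bodyD(2,1)[OF K],
        OF continuous_on_inner[OF continuous_on_id continuous_on_const]] by blast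
  have "supp_point K u = x"
    unfolding supp_point_def
    using x linear_maximizer_unique[OF K assms(2)] by (intro the_equality) blast+
  then show ?thesis
    using x by simp
qed

lemma supp_point_in_body: "strictly_convex_body K \<Longrightarrow> u \<noteq> 0 \<Longrightarrow> supp_point K u \<in> K"
  using supp_point_maximizer by blast

lemma supp_point_max: "strictly_convex_body K \<Longrightarrow> u \<noteq> 0 \<Longrightarrow> y \<in> K \<Longrightarrow> y \<bullet> u \<le> supp_point K u \<bullet> u"
  using supp_point_maximizer by blast

lemma inner_le_inner_add_norm_dist:
  fixes x u v :: "'a::real_inner"
  assumes "norm x \<le> B"
  shows "x \<bullet> v \<le> x \<bullet> u + B * dist u v"
proof -
  have "x \<bullet> (v - u) \<le> norm x * norm (v - u)"
    by (rule norm_cauchy_schwarz)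
  also have "\<dots> \<le> B * dist u v"
    using assms by (simp add: dist_norm norm_minus_commute mult_right_mono)
  finally show ?thesis
    by (simp add: inner_diff_right)
qed

lemma strictly_convex_body_norm_bound:
  assumes "strictly_convex_body K"
  obtains B where "B > 0" "\<And>x. x \<in> K \<Longrightarrow> norm x \<le> B"
  using compact_imp_bounded[OF strictly_convex_bodyD(2)[OF assms]] by (auto simp: bounded_pos)

lemma lipschitz_on_support_function:
  assumes K: "strictly_convex_body K" and B: "\<And>x. x \<in> K \<Longrightarrow> norm x \<le> B" "0 \<le> B"
  shows "B-lipschitz_on (- {0}) (\<lambda>u. supp_point K u \<bullet> u)"
proof (rule lipschitz_onI)
  have le: "supp_point K v \<bullet> v \<le> supp_point K u \<bullet> u + B * dist u v" if "u \<noteq> 0" "v \<noteq> 0" for u v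
    using inner_le_inner_add_norm_dist[OF B(1)[OF supp_point_in_body[OF K that(2)]], where u=u and v=v]
      supp_point_max[OF K that(1) supp_point_in_body[OF K that(2)]] by linarith
  fix u v :: R2 assume "u \<in> - {0}" "v \<in> - {0}"
  then show "dist (supp_point K u \<bullet> u) (supp_point K v \<bullet> v) \<le> B * dist u v"
    using le[of u v] le[of v u] by (simp add: dist_real_def dist_commute abs_le_iff)
qed (use B in simp)

text \<open>On the compact set of triples \<open>(u, x, z)\<close> with \<open>x, z \<in> K\<close> at distance \<open>\<ge> \<epsilon>\<close>, the smaller
  of the deficits of \<open>x\<close> and \<open>z\<close> in direction \<open>u\<close> never vanishes (uniqueness of support points),
  hence is bounded away from \<open>0\<close>.\<close>
lemma supp_point_near_if_nearly_maximal:
  assumes K: "strictly_convex_body K" and "\<epsilon> > 0"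
  obtains \<eta> where "\<eta> > 0"
    "\<And>u x. u \<in> sphere 0 1 \<Longrightarrow> x \<in> K \<Longrightarrow> supp_point K u \<bullet> u - \<eta> \<le> x \<bullet> u \<Longrightarrow> dist x (supp_point K u) < \<epsilon>"
proof -
  define S :: "(R2 \<times> R2 \<times> R2) set" where
    "S = (sphere 0 1 \<times> K \<times> K) \<inter> {(u, x, z). \<epsilon> \<le> dist x z}"
  define f :: "R2 \<times> R2 \<times> R2 \<Rightarrow> real" where
    "f = (\<lambda>(u, x, z). min (x \<bullet> u) (z \<bullet> u) - supp_point K u \<bullet> u)"
  obtain B where B: "B > 0" "\<And>x. x \<in> K \<Longrightarrow> norm x \<le> B"
    using strictly_convex_body_norm_bound[OF K] by blast
  have h: "continuous_on (sphere 0 1) (\<lambda>u. supp_point K u \<bullet> u)"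
    using lipschitz_on_continuous_on[OF lipschitz_on_subset[OF
        lipschitz_on_support_function[OF K B(2) less_imp_le[OF B(1)]]]] by auto
  have "compact S"
    unfolding S_def case_prod_unfold
    by (intro compact_Int_closed compact_Times compact_sphere strictly_convex_bodyD(2)[OF K]
        closed_Collect_le continuous_intros)
  moreover have "continuous_on S f"
    unfolding f_def case_prod_unfold
    by (intro continuous_intros continuous_on_compose2[OF h]) (auto simp: S_def)
  moreover have f_neg: "f p < 0" if "p \<in> S" for p
  proof (rule ccontr)
    obtain u x z where p: "p = (u, x, z)" by (cases p)
    have u: "u \<noteq> 0" and xz: "x \<in> K" "z \<in> K" "\<epsilon> \<le> dist x z"
      using that by (auto simp: S_def p)
    assume "\<not> f p < 0"
    then have "y \<bullet> u \<le> x \<bullet> u" "y \<bullet> u \<le> z \<bullet> u" if "y \<in> K" for y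
      using supp_point_max[OF K u that] by (auto simp: f_def p)
    then have "x = z"
      using linear_maximizer_unique[OF K u xz(1,2)] by blast
    then show False
      using xz(3) assms(2) by simp
  qed
  ultimately obtain m where m: "m < 0" "\<And>p. p \<in> S \<Longrightarrow> f p \<le> m"
  proof (cases "S = {}")
    case False
    then show ?thesis
      using continuous_attains_sup[of S f] that f_neg \<open>compact S\<close> \<open>continuous_on S f\<close> by metis
  qed (use that[of "-1"] in simp)
  show ?thesis
  proof (rule that[of "- m / 2"])
    show "0 < - m / 2" using m(1) by simp
    fix u x assume u: "u \<in> sphere 0 1" and x: "x \<in> K" and nearly: "supp_point K u \<bullet> u - - m / 2 \<le> x \<bullet> u"
    have "u \<noteq> 0"
      using u by auto
    then have sp: "supp_point K u \<in> K"
      by (rule supp_point_in_body[OF K])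
    show "dist x (supp_point K u) < \<epsilon>"
    proof (rule ccontr)
      assume "\<not> dist x (supp_point K u) < \<epsilon>"
      then have "f (u, x, supp_point K u) \<le> m"
        using m(2) u x sp by (auto simp: S_def)
      then show False
        using nearly m(1) by (auto simp: f_def)
    qed
  qed
qed

lemma continuous_on_supp_point:
  assumes K: "strictly_convex_body K"
  shows "continuous_on (sphere 0 1) (supp_point K)"
  unfolding continuous_on_iff
proof (intro ballI allI impI)
  fix u e assume u: "u \<in> sphere (0::R2) 1" and "(0::real) < e"
  obtain \<eta> where \<eta>: "\<eta> > 0"
    "\<And>u x. u \<in> sphere 0 1 \<Longrightarrow> x \<in> K \<Longrightarrow> supp_point K u \<bullet> u - \<eta> \<le> x \<bullet> u \<Longrightarrow> dist x (supp_point K u) < e"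
    using supp_point_near_if_nearly_maximal[OF K \<open>0 < e\<close>] by blast
  obtain B where B: "B > 0" "\<And>x. x \<in> K \<Longrightarrow> norm x \<le> B"
    using strictly_convex_body_norm_bound[OF K] by blast
  show "\<exists>d>0. \<forall>u'\<in>sphere 0 1. dist u' u < d \<longrightarrow> dist (supp_point K u') (supp_point K u) < e"
  proof (intro exI[of _ "\<eta> / (2 * B)"] conjI ballI impI)
    fix u' assume u': "u' \<in> sphere (0::R2) 1" and "dist u' u < \<eta> / (2 * B)"
    then have small: "2 * B * dist u' u < \<eta>"
      using B(1) by (simp add: field_simps)
    have nz: "u \<noteq> 0" "u' \<noteq> 0"
      using u u' by auto
    have x: "supp_point K u' \<in> K"
      by (rule supp_point_in_body[OF K nz(2)])
    have "supp_point K u' \<bullet> u' \<le> supp_point K u' \<bullet> u + B * dist u u'"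
      by (rule inner_le_inner_add_norm_dist[OF B(2)[OF x]])
    moreover have "supp_point K u \<bullet> u \<le> supp_point K u \<bullet> u' + B * dist u' u"
      by (rule inner_le_inner_add_norm_dist[OF B(2)[OF supp_point_in_body[OF K nz(1)]]])
    moreover have "supp_point K u \<bullet> u' \<le> supp_point K u' \<bullet> u'"
      by (rule supp_point_max[OF K nz(2) supp_point_in_body[OF K nz(1)]])
    ultimately have "supp_point K u \<bullet> u - \<eta> \<le> supp_point K u' \<bullet> u"
      using small by (simp add: dist_commute)
    then show "dist (supp_point K u') (supp_point K u) < e"
      by (rule \<eta>(2)[OF u x])
  qed (use \<eta>(1) B(1) in simp)
qed

lemma inner_unit_le_add_dist:
  fixes x y u :: "'a::real_inner"
  assumes "norm u = 1"
  shows "y \<bullet> u \<le> x \<bullet> u + dist x y"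
  using inner_le_inner_add_norm_dist[of u 1 y x] assms by (simp add: inner_commute dist_commute)

lemma supp_point_uniformly_close:
  assumes K: "strictly_convex_body K" and "\<epsilon> > 0"
  obtains d where "d > 0" "\<And>L u. strictly_convex_body L \<Longrightarrow> hausdorff_dist K L < d \<Longrightarrow> u \<in> sphere 0 1 \<Longrightarrow>
      dist (supp_point L u) (supp_point K u) < \<epsilon>"
proof -
  obtain \<eta> where \<eta>: "\<eta> > 0"
    "\<And>u x. u \<in> sphere 0 1 \<Longrightarrow> x \<in> K \<Longrightarrow> supp_point K u \<bullet> u - \<eta> \<le> x \<bullet> u \<Longrightarrow> dist x (supp_point K u) < \<epsilon>/2"
    using supp_point_near_if_nearly_maximal[OF K half_gt_zero[OF \<open>\<epsilon> > 0\<close>]] by blast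
  define d where "d = min (\<eta>/2) (\<epsilon>/2)"
  show ?thesis
  proof (rule that[of d])
    show "d > 0" using \<eta>(1) \<open>\<epsilon> > 0\<close> by (simp add: d_def)
    fix L and u :: R2
    assume L: "strictly_convex_body L" "hausdorff_dist K L < d" and u: "u \<in> sphere 0 1"
    have close: "hausdorff_close d K L"
      using hausdorff_close_if_hausdorff_dist_less strictly_convex_bodyD K L by blast
    have nu: "norm u = 1" and nz: "u \<noteq> 0"
      using u by auto
    obtain x where x: "x \<in> K" "dist (supp_point L u) x < d"
      using close supp_point_in_body[OF L(1) nz] by (auto simp: hausdorff_close_def)
    obtain x' where x': "x' \<in> L" "dist (supp_point K u) x' < d"
      using close supp_point_in_body[OF K nz] by (auto simp: hausdorff_close_def)
    have "supp_point K u \<bullet> u \<le> x' \<bullet> u + dist x' (supp_point K u)"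
      by (rule inner_unit_le_add_dist[OF nu])
    moreover have "x' \<bullet> u \<le> supp_point L u \<bullet> u"
      by (rule supp_point_max[OF L(1) nz x'(1)])
    moreover have "supp_point L u \<bullet> u \<le> x \<bullet> u + dist x (supp_point L u)"
      by (rule inner_unit_le_add_dist[OF nu])
    ultimately have "supp_point K u \<bullet> u - \<eta> \<le> x \<bullet> u"
      using x(2) x'(2) by (simp add: d_def dist_commute)
    then have "dist x (supp_point K u) < \<epsilon>/2"
      by (rule \<eta>(2)[OF u x(1)])
    then show "dist (supp_point L u) (supp_point K u) < \<epsilon>"
      using x(2) dist_triangle[of "supp_point L u" "supp_point K u" x] by (simp add: d_def)
  qed
qed

lemma dist_midpoints_le:
  fixes a b c d :: "'a::real_normed_vector"
  shows "dist ((1/2) *\<^sub>R (a + b)) ((1/2) *\<^sub>R (c + d)) \<le> (dist a c + dist b d) / 2"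
proof -
  have "(1/2) *\<^sub>R (a + b) - (1/2) *\<^sub>R (c + d) = (1/2) *\<^sub>R ((a - c) + (b - d))"
    by (simp add: algebra_simps)
  then show ?thesis
    using norm_triangle_ineq[of "a - c" "b - d"] by (simp add: dist_norm divide_right_mono)
qed

lemma continuous_on_mid_point_fn:
  assumes "strictly_convex_body K"
  shows "continuous_on (sphere 0 1) (mid_point_fn K)"
proof -
  have "continuous_on (sphere 0 1) (\<lambda>u. supp_point K (- u))"
    by (rule continuous_on_compose2[OF continuous_on_supp_point[OF assms]]) (auto intro: continuous_intros)
  then show ?thesis
    unfolding mid_point_fn_def[abs_def]
    by (intro continuous_intros continuous_on_supp_point[OF assms])
qed

lemma compact_middle_hedgehog:
  "strictly_convex_body K \<Longrightarrow> compact (middle_hedgehog K)"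
  unfolding middle_hedgehog_def
  by (rule compact_continuous_image[OF continuous_on_mid_point_fn compact_sphere])

lemma hausdorff_close_middle_hedgehog:
  assumes K: "strictly_convex_body K" and "\<epsilon> > 0"
  obtains d where "d > 0" "\<And>L. strictly_convex_body L \<Longrightarrow> hausdorff_dist K L < d \<Longrightarrow>
      hausdorff_close \<epsilon> (middle_hedgehog K) (middle_hedgehog L)"
proof -
  obtain d where d: "d > 0" "\<And>L u. strictly_convex_body L \<Longrightarrow> hausdorff_dist K L < d \<Longrightarrow>
      u \<in> sphere 0 1 \<Longrightarrow> dist (supp_point L u) (supp_point K u) < \<epsilon>"
    using supp_point_uniformly_close[OF assms] by blast
  have "dist (mid_point_fn L u) (mid_point_fn K u) < \<epsilon>"
    if "strictly_convex_body L" "hausdorff_dist K L < d" "u \<in> sphere 0 1" for L u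
    using dist_midpoints_le[of "supp_point L u" "supp_point L (-u)" "supp_point K u" "supp_point K (-u)"]
      d(2)[OF that] d(2)[OF that(1,2), of "-u"] that(3)
    by (simp add: mid_point_fn_def)
  then show ?thesis
    using that[OF d(1)] unfolding hausdorff_close_def middle_hedgehog_def
    by (fastforce simp: dist_commute)
qed

lemma card_exposed_points_lower_semicontinuous:
  fixes M :: "'a::euclidean_space set"
  assumes "compact M" "finite P" "\<And>p. p \<in> P \<Longrightarrow> {p} exposed_face_of convex hull M"
  obtains \<eta> where "\<eta> > 0"
    "\<And>N. compact N \<Longrightarrow> hausdorff_close \<eta> M N \<Longrightarrow> finite {q. {q} exposed_face_of convex hull N} \<Longrightarrow>
      card P \<le> card {q. {q} exposed_face_of convex hull N}"
proof -
  obtain \<delta> where \<delta>: "\<delta> > 0" "\<And>p q. p \<in> P \<Longrightarrow> q \<in> P \<Longrightarrow> p \<noteq> q \<Longrightarrow> 2 * \<delta> \<le> dist p q"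
    using finite_set_separated[OF assms(2)] by blast
  have "\<forall>\<^sub>F \<eta> in at_right 0. \<forall>p\<in>P. \<forall>N. compact N \<and> hausdorff_close \<eta> M N \<longrightarrow>
          (\<exists>q. {q} exposed_face_of convex hull N \<and> dist q p < \<delta>)"
    using assms(2) by (rule eventually_ball_finite)
      (use eventually_exposed_point_near[OF assms(1) assms(3) \<delta>(1)] in blast)
  then obtain \<eta> where "\<eta> > 0" and persist: "\<And>p N. p \<in> P \<Longrightarrow> compact N \<Longrightarrow> hausdorff_close \<eta> M N \<Longrightarrow>
          \<exists>q. {q} exposed_face_of convex hull N \<and> dist q p < \<delta>"
    by (rule eventually_at_right_0_obtain) blast
  show ?thesis
  proof (rule that[OF \<open>\<eta> > 0\<close>])
    fix N assume N: "compact N" "hausdorff_close \<eta> M N" "finite {q. {q} exposed_face_of convex hull N}"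
    show "card P \<le> card {q. {q} exposed_face_of convex hull N}"
      using persist[OF _ N(1,2)] by (intro card_le_card_if_separated_near[OF N(3) \<delta>(2)]) auto
  qed
qed

lemma obtain_subset_card_Suc:
  assumes "\<not> (finite E \<and> card E \<le> k)"
  obtains P where "P \<subseteq> E" "finite P" "card P = Suc k"
proof (cases "finite E")
  case True
  then show ?thesis
    using assms obtain_subset_with_card_n[of "Suc k" E] that by auto
next
  case False
  then show ?thesis
    using infinite_arbitrarily_large[OF False] that by blast
qed

theorem lemma2:
  fixes k :: nat
  shows "\<forall>K. strictly_convex_body K \<and> K \<notin> A_set k \<longrightarrow>
           (\<exists>e>0. \<forall>L. strictly_convex_body L \<and> hausdorff_dist K L < e \<longrightarrow> L \<notin> A_set k)"
proof (intro allI impI)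
  fix K assume asm: "strictly_convex_body K \<and> K \<notin> A_set k"
  then have K: "strictly_convex_body K" by blast
  obtain P where P: "P \<subseteq> exposed_points (convex hull middle_hedgehog K)" "finite P" "card P = Suc k"
    using asm obtain_subset_card_Suc by (auto simp: A_set_def)
  obtain \<eta> where "\<eta> > 0" and many: "\<And>N. compact N \<Longrightarrow> hausdorff_close \<eta> (middle_hedgehog K) N \<Longrightarrow>
      finite {q. {q} exposed_face_of convex hull N} \<Longrightarrow> card P \<le> card {q. {q} exposed_face_of convex hull N}"
    by (rule card_exposed_points_lower_semicontinuous[OF compact_middle_hedgehog[OF K] P(2)])
      (use P(1) in \<open>auto simp: exposed_points_def\<close>)
  obtain d where "d > 0" and close: "\<And>L. strictly_convex_body L \<Longrightarrow> hausdorff_dist K L < d \<Longrightarrow>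
      hausdorff_close \<eta> (middle_hedgehog K) (middle_hedgehog L)"
    using hausdorff_close_middle_hedgehog[OF K \<open>\<eta> > 0\<close>] by blast
  have "L \<notin> A_set k" if L: "strictly_convex_body L" "hausdorff_dist K L < d" for L
  proof
    assume "L \<in> A_set k"
    then have "finite {q. {q} exposed_face_of convex hull middle_hedgehog L}"
      and "card {q. {q} exposed_face_of convex hull middle_hedgehog L} \<le> k"
      by (simp_all add: A_set_def exposed_points_def)
    then show False
      using many[OF compact_middle_hedgehog[OF L(1)] close[OF L]] P(3) by simp
  qed
  then show "\<exists>e>0. \<forall>L. strictly_convex_body L \<and> hausdorff_dist K L < e \<longrightarrow> L \<notin> A_set k"
    using \<open>d > 0\<close> by blast
qed

end
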